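(* Let $I,J$ be countable sets with nested finite subsets $I_1\subset I_2\subset\cdots$, $\bigcup_nI_n=I$, and $J_1\subset J_2\subset\cdots$, $\bigcup_nJ_n=J$, and let $a:I\to J$ be a bijection with $$\lim_{n\to\infty}\frac{|a(I_n)\cap J_n|}{|I_n|}=\lim_{n\to\infty}\frac{|J_n|}{|I_n|}=1.$$ Then for every bounded operator $T\in B(\ell^2(J))$ and every $p\in\mathbb{N}^*$, $$p\text{-}\lim_n\frac{1}{|J_n|}\sum_{j\in J_n}T_{j,j}=p\text{-}\lim_n\frac{1}{|I_n|}\sum_{i\in I_n}T_{a(i),a(i)},$$ i.e. $\mu(T)=\mu(a_*(T))$.
   Context: $\{\epsilon_j\}_{j\in J}$ and $\{\delta_i\}_{i\in I}$ are the canonical orthonormal bases of $\ell^2(J)$ and $\ell^2(I)$; $T_{j,k}=\langle T\epsilon_j,\epsilon_k\rangle$. $a_*(T)\in B(\ell^2(I))$ is defined by $\langle a_*(T)\delta_{i_1},\delta_{i_2}\rangle=\langle T\epsilon_{a(i_1)},\epsilon_{a(i_2)}\rangle$. $\mathbb{N}^*$ is the set of free ultrafilters on $\mathbb{N}$, and for a bounded complex sequence $\mathbf{x}$, $p\text{-}\lim\mathbf{x}=c$ iff for every $\varepsilon>0$ the set $\{n:|x_n-c|<\varepsilon\}$ belongs to $p$. For an operator $T$ on $\ell^2(J)$ (resp. $\ell^2(I)$) the ultrafilter measure $\mu(T)(p)$ is $p\text{-}\lim_n\frac1{|J_n|}\sum_{j\in J_n}T_{j,j}$ (resp. with $I_n$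 and the basis $\delta_i$). *)

theory Defs
  imports "HOL-Analysis.Analysis"
begin

text \<open>An operator on l2(J) is represented by its matrix
  T j k = <T e_j, e_k> (j, k in J). The matrix defines a bounded operator
  on l2(J) iff there is a constant C with norm (T x) <= C * norm x for all
  finitely supported x in l2(J), where (T x)_k = sum_j T j k * x j.
  The norm of T x is expressed as the supremum of its finite partial sums.\<close>
definition bounded_op_matrix :: "'j set \<Rightarrow> ('j \<Rightarrow> 'j \<Rightarrow> complex) \<Rightarrow> bool" where
  "bounded_op_matrix J T \<longleftrightarrow>
     (\<exists>C::real. \<forall>x::'j \<Rightarrow> complex. \<forall>S K.
        finite S \<and> S \<subseteq> J \<and> finite K \<and> K \<subseteq> J \<and> (\<forall>j. j \<notin> S \<longrightarrow> x j = 0) \<longrightarrow>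
        (\<Sum>k\<in>K. (cmod (\<Sum>j\<in>S. T j k * x j))\<^sup>2) \<le> C\<^sup>2 * (\<Sum>j\<in>S. (cmod (x j))\<^sup>2))"

definition push_op :: "('i \<Rightarrow> 'j) \<Rightarrow> ('j \<Rightarrow> 'j \<Rightarrow> complex) \<Rightarrow> ('i \<Rightarrow> 'i \<Rightarrow> complex)" where
  "push_op a T = (\<lambda>i1 i2. T (a i1) (a i2))"

definition free_ultrafilter_nat :: "nat filter \<Rightarrow> bool" where
  "free_ultrafilter_nat p \<longleftrightarrow>
     p \<noteq> bot \<and>
     (\<forall>A. eventually (\<lambda>n. n \<in> A) p \<or> eventually (\<lambda>n. n \<notin> A) p) \<and>
     p \<le> cofinite"

definition plim :: "nat filter \<Rightarrow> (nat \<Rightarrow> complex) \<Rightarrow> complex" where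
  "plim p x = Lim p x"

definition ultra_measure :: "(nat \<Rightarrow> 'j set) \<Rightarrow> ('j \<Rightarrow> 'j \<Rightarrow> complex) \<Rightarrow> nat filter \<Rightarrow> complex" where
  "ultra_measure Js T p = plim p (\<lambda>n. (\<Sum>j\<in>Js n. T j j) / of_nat (card (Js n)))"

end

theory Submission
  imports Defs
begin

text \<open>The diagonal entries of a bounded operator are bounded, so both normalised traces
  are bounded sequences and their p-limits exist. The two traces differ only on the
  symmetric difference of \<open>J\<^sub>n\<close> and \<open>a(I\<^sub>n)\<close>; the hypotheses say that this symmetric
  difference, as well as the discrepancy between the normalisations \<open>|J\<^sub>n|\<close> and \<open>|I\<^sub>n|\<close>,
  is \<open>o(|I\<^sub>n|)\<close>. Hence the two sequences differ by a null sequence, and their limits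
  along any free ultrafilter agree.\<close>

lemma bounded_op_matrix_entries_bounded:
  assumes "bounded_op_matrix J T"
  obtains M where "M \<ge> 0" "\<And>j k. j \<in> J \<Longrightarrow> k \<in> J \<Longrightarrow> cmod (T j k) \<le> M"
proof -
  obtain C :: real where C: "\<forall>x S K. finite S \<and> S \<subseteq> J \<and> finite K \<and> K \<subseteq> J \<and>
      (\<forall>j. j \<notin> S \<longrightarrow> x j = 0) \<longrightarrow>
      (\<Sum>k\<in>K. (cmod (\<Sum>j\<in>S. T j k * x j))\<^sup>2) \<le> C\<^sup>2 * (\<Sum>j\<in>S. (cmod (x j))\<^sup>2)"
    using assms unfolding bounded_op_matrix_def by blast
  have "cmod (T j k) \<le> \<bar>C\<bar>" if "j \<in> J" "k \<in> J" for j k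
  proof -
    have "(cmod (T j k))\<^sup>2 \<le> \<bar>C\<bar>\<^sup>2"
      using C[rule_format, where x = "\<lambda>j'. if j' = j then 1 else 0" and S = "{j}" and K = "{k}"]
        that by simp
    then show ?thesis by (rule power2_le_imp_le) simp
  qed
  then show thesis using that[of "\<bar>C\<bar>"] by simp
qed

lemma ultrafilter_tendsto_exists:
  fixes F :: "'a filter" and x :: "'a \<Rightarrow> 'b::topological_space"
  assumes "F \<noteq> bot"
    and ultra: "\<And>A. eventually (\<lambda>n. n \<in> A) F \<or> eventually (\<lambda>n. n \<notin> A) F"
    and "compact K" and "eventually (\<lambda>n. x n \<in> K) F"
  shows "\<exists>L. (x \<longlongrightarrow> L) F"
proof -
  have "filtermap x F \<noteq> bot" "eventually (\<lambda>z. z \<in> K) (filtermap x F)"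
    using assms by (simp_all add: filtermap_bot_iff eventually_filtermap)
  then obtain L where L: "inf (nhds L) (filtermap x F) \<noteq> bot"
    using \<open>compact K\<close> unfolding compact_filter by blast
  have "eventually (\<lambda>n. x n \<in> S) F" if "open S" "L \<in> S" for S
  proof (rule ccontr)
    assume "\<not> eventually (\<lambda>n. x n \<in> S) F"
    then have "eventually (\<lambda>z. z \<notin> S) (filtermap x F)"
      using ultra[of "x -` S"] by (simp add: eventually_filtermap)
    moreover have "eventually (\<lambda>z. z \<in> S) (nhds L)"
      using that eventually_nhds by blast
    ultimately have "eventually (\<lambda>_. False) (inf (nhds L) (filtermap x F))"
      unfolding eventually_inf by blast
    with L show False by (simp add: eventually_False)
  qed
  then show ?thesis unfolding tendsto_def by blast
qed

lemma plim_eq_if_diff_tendsto_zero: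
  fixes x y :: "nat \<Rightarrow> complex"
  assumes p: "free_ultrafilter_nat p" and x_bounded: "\<And>n. norm (x n) \<le> B"
    and diff: "(\<lambda>n. x n - y n) \<longlonglongrightarrow> 0"
  shows "plim p x = plim p y"
proof -
  have "p \<noteq> bot" and "p \<le> sequentially"
    and ultra: "\<And>A. eventually (\<lambda>n. n \<in> A) p \<or> eventually (\<lambda>n. n \<notin> A) p"
    using p unfolding free_ultrafilter_nat_def by (auto simp: cofinite_eq_sequentially)
  obtain L where x_lim: "(x \<longlongrightarrow> L) p"
    using ultrafilter_tendsto_exists[OF \<open>p \<noteq> bot\<close> ultra compact_cball, of x 0 B] x_bounded
    by auto
  have "((\<lambda>n. x n - (x n - y n)) \<longlongrightarrow> L - 0) p"
    using x_lim tendsto_mono[OF \<open>p \<le> sequentially\<close> diff] by (rule tendsto_diff)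
  then have "(y \<longlongrightarrow> L) p" by simp
  with x_lim show ?thesis
    unfolding plim_def using tendsto_Lim[OF \<open>p \<noteq> bot\<close>] by metis
qed

lemma norm_average_le:
  fixes f :: "'a \<Rightarrow> 'b::real_normed_field"
  assumes "\<And>x. x \<in> S \<Longrightarrow> norm (f x) \<le> M" and "M \<ge> 0"
  shows "norm (sum f S / of_nat (card S)) \<le> M"
proof (cases "card S = 0")
  case False
  have "norm (sum f S) \<le> of_nat (card S) * M"
    using assms(1) by (rule sum_norm_bound)
  with False show ?thesis by (simp add: norm_divide divide_le_eq mult.commute)
qed (simp add: \<open>M \<ge> 0\<close>)

lemma norm_sum_diff_le_card:
  fixes f :: "'a \<Rightarrow> 'b::real_normed_vector"
  assumes "finite S" "finite S'" and f_bounded: "\<And>x. x \<in> S \<union> S' \<Longrightarrow> norm (f x) \<le> M"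
  shows "norm (sum f S - sum f S')
    \<le> M * (real (card S) + real (card S') - 2 * real (card (S \<inter> S')))"
proof -
  have "sum f S - sum f S' = sum f (S - S') - sum f (S' - S)"
    using sum.Int_Diff[OF \<open>finite S\<close>, of f S'] sum.Int_Diff[OF \<open>finite S'\<close>, of f S]
    by (simp add: Int_commute)
  also have "norm \<dots> \<le> norm (sum f (S - S')) + norm (sum f (S' - S))"
    by (rule norm_triangle_ineq4)
  also have "\<dots> \<le> real (card (S - S')) * M + real (card (S' - S)) * M"
    using f_bounded by (intro add_mono sum_norm_bound) auto
  also have "\<dots> = M * (real (card S) + real (card S') - 2 * real (card (S \<inter> S')))"
    using card_Int_Diff[OF \<open>finite S\<close>, of S'] card_Int_Diff[OF \<open>finite S'\<close>, of S]
    by (simp add: Int_commute algebra_simps)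
  finally show ?thesis .
qed

text \<open>The bound splits the difference at \<open>\<Sigma>\<^sub>S f / |S'|\<close>: renormalising costs
  \<open>|1 - r|\<close> and exchanging the index set costs the relative symmetric difference.\<close>

lemma norm_average_diff_le:
  fixes f :: "'a \<Rightarrow> 'b::real_normed_field"
  assumes "finite S" "finite S'" and f_bounded: "\<And>x. x \<in> S \<union> S' \<Longrightarrow> norm (f x) \<le> M"
    and "M \<ge> 0"
  defines "r \<equiv> real (card S) / real (card S')"
    and "s \<equiv> real (card (S \<inter> S')) / real (card S')"
  shows "norm (sum f S / of_nat (card S) - sum f S' / of_nat (card S'))
    \<le> M * \<bar>1 - r\<bar> + M * (r + 1 - 2 * s)"
proof (cases "card S' = 0")
  case True
  then show ?thesis
    using norm_average_le[of S f M] f_bounded \<open>M \<ge> 0\<close> by (simp add: r_def s_def)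
next
  case False
  define u where "u = sum f S / of_nat (card S')"
  have "sum f S / of_nat (card S) - u = (sum f S / of_nat (card S)) * of_real (1 - r)"
    using False \<open>finite S\<close> by (cases "card S = 0") (auto simp: u_def r_def field_simps)
  then have "norm (sum f S / of_nat (card S) - u) = norm (sum f S / of_nat (card S)) * \<bar>1 - r\<bar>"
    by (simp only: norm_mult norm_of_real)
  also have "\<dots> \<le> M * \<bar>1 - r\<bar>"
    using norm_average_le[of S f M] f_bounded \<open>M \<ge> 0\<close> by (intro mult_right_mono) auto
  finally have renormalise: "norm (sum f S / of_nat (card S) - u) \<le> M * \<bar>1 - r\<bar>" .
  have exchange: "norm (u - sum f S' / of_nat (card S')) \<le> M * (r + 1 - 2 * s)"
  proof -
    have "norm (u - sum f S' / of_nat (card S')) = norm (sum f S - sum f S') / real (card S')"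
      by (simp add: u_def diff_divide_distrib[symmetric] norm_divide)
    also have "\<dots> \<le> M * (real (card S) + real (card S') - 2 * real (card (S \<inter> S')))
        / real (card S')"
      using norm_sum_diff_le_card[OF assms(1-3)] by (simp add: divide_right_mono)
    also have "\<dots> = M * (r + 1 - 2 * s)"
      using False by (simp add: r_def s_def field_simps)
    finally show ?thesis .
  qed
  from renormalise exchange show ?thesis by (rule norm_diff_triangle_le)
qed

lemma average_diff_tendsto_zero:
  fixes f :: "'a \<Rightarrow> 'b::real_normed_field"
  assumes "\<And>n. finite (S n)" "\<And>n. finite (S' n)"
    and f_bounded: "\<And>n x. x \<in> S n \<union> S' n \<Longrightarrow> norm (f x) \<le> M" and "M \<ge> 0"
    and overlap: "(\<lambda>n. real (card (S n \<inter> S' n)) / real (card (S' n))) \<longlonglongrightarrow> 1"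
    and ratio: "(\<lambda>n. real (card (S n)) / real (card (S' n))) \<longlonglongrightarrow> 1"
  shows "(\<lambda>n. sum f (S n) / of_nat (card (S n)) - sum f (S' n) / of_nat (card (S' n)))
    \<longlonglongrightarrow> 0"
proof (rule Lim_null_comparison)
  let ?r = "\<lambda>n. real (card (S n)) / real (card (S' n))"
  let ?s = "\<lambda>n. real (card (S n \<inter> S' n)) / real (card (S' n))"
  show "\<forall>\<^sub>F n in sequentially.
      norm (sum f (S n) / of_nat (card (S n)) - sum f (S' n) / of_nat (card (S' n)))
      \<le> M * \<bar>1 - ?r n\<bar> + M * (?r n + 1 - 2 * ?s n)"
    using norm_average_diff_le[OF assms(1,2) f_bounded \<open>M \<ge> 0\<close>] by simp
  have "(\<lambda>n. M * \<bar>1 - ?r n\<bar> + M * (?r n + 1 - 2 * ?s n))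
      \<longlonglongrightarrow> M * \<bar>1 - 1\<bar> + M * (1 + 1 - 2 * 1)"
    using overlap ratio by (intro tendsto_intros)
  then show "(\<lambda>n. M * \<bar>1 - ?r n\<bar> + M * (?r n + 1 - 2 * ?s n)) \<longlonglongrightarrow> 0"
    by simp
qed

theorem proposition8p1:
  fixes I :: "'i set" and J :: "'j set"
    and Is :: "nat \<Rightarrow> 'i set" and Js :: "nat \<Rightarrow> 'j set"
    and a :: "'i \<Rightarrow> 'j"
  assumes "countable I" and "countable J"
    and "\<And>n. finite (Is n)" and "\<And>n. Is n \<subseteq> Is (Suc n)" and "(\<Union>n. Is n) = I"
    and "\<And>n. finite (Js n)" and "\<And>n. Js n \<subseteq> Js (Suc n)" and "(\<Union>n. Js n) = J"
    and "bij_betw a I J"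
    and "(\<lambda>n. real (card (a ` Is n \<inter> Js n)) / real (card (Is n))) \<longlonglongrightarrow> 1"
    and "(\<lambda>n. real (card (Js n)) / real (card (Is n))) \<longlonglongrightarrow> 1"
  shows "\<forall>T p. bounded_op_matrix J T \<and> free_ultrafilter_nat p \<longrightarrow>
           plim p (\<lambda>n. (\<Sum>j\<in>Js n. T j j) / of_nat (card (Js n)))
         = plim p (\<lambda>n. (\<Sum>i\<in>Is n. T (a i) (a i)) / of_nat (card (Is n)))
         \<and> ultra_measure Js T p = ultra_measure Is (push_op a T) p"
proof (intro allI impI)
  fix T p assume "bounded_op_matrix J T \<and> free_ultrafilter_nat p"
  then obtain M where "M \<ge> 0" and T_bounded: "\<And>j. j \<in> J \<Longrightarrow> cmod (T j j) \<le> M"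
    and p: "free_ultrafilter_nat p"
    using bounded_op_matrix_entries_bounded by metis
  have "Is n \<subseteq> I" and "Js n \<subseteq> J" for n
    using \<open>(\<Union>n. Is n) = I\<close> \<open>(\<Union>n. Js n) = J\<close> by auto
  moreover have "inj_on a (Is n)" and "a ` Is n \<subseteq> J" for n
    using bij_betw_imp_inj_on[OF \<open>bij_betw a I J\<close>] bij_betw_imp_surj_on[OF \<open>bij_betw a I J\<close>]
      \<open>Is n \<subseteq> I\<close> by (auto intro: inj_on_subset)
  ultimately have reindex: "(\<Sum>i\<in>Is n. T (a i) (a i)) / of_nat (card (Is n))
      = (\<Sum>j\<in>a ` Is n. T j j) / of_nat (card (a ` Is n))" for n
    by (simp add: sum.reindex card_image)
  have diag_bounded: "cmod (T j j) \<le> M" if "j \<in> Js n \<union> a ` Is n" for n j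
    using T_bounded that \<open>Js n \<subseteq> J\<close> \<open>a ` Is n \<subseteq> J\<close> by blast
  have "(\<lambda>n. (\<Sum>j\<in>Js n. T j j) / of_nat (card (Js n))
      - (\<Sum>j\<in>a ` Is n. T j j) / of_nat (card (a ` Is n))) \<longlonglongrightarrow> 0"
    using assms(3,6,10,11) \<open>\<And>n. inj_on a (Is n)\<close>
    by (intro average_diff_tendsto_zero[OF _ _ diag_bounded \<open>M \<ge> 0\<close>])
      (auto simp: card_image Int_commute)
  then have "plim p (\<lambda>n. (\<Sum>j\<in>Js n. T j j) / of_nat (card (Js n)))
      = plim p (\<lambda>n. (\<Sum>i\<in>Is n. T (a i) (a i)) / of_nat (card (Is n)))"
    unfolding reindex using diag_bounded \<open>M \<ge> 0\<close>
    by (intro plim_eq_if_diff_tendsto_zero[OF p, of _ M] norm_average_le) auto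
  then show "plim p (\<lambda>n. (\<Sum>j\<in>Js n. T j j) / of_nat (card (Js n)))
         = plim p (\<lambda>n. (\<Sum>i\<in>Is n. T (a i) (a i)) / of_nat (card (Is n)))
         \<and> ultra_measure Js T p = ultra_measure Is (push_op a T) p"
    by (simp add: ultra_measure_def push_op_def)
qed

end
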